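(* Let $n\ge1$ and let $f(x):=P(x)+iQ(x)$ with $P(x):=x^n+a_1x^{n-1}+\cdots+a_n$ and $Q(x):=b_1x^{n-1}+\cdots+b_n$ real polynomials. Suppose $f$ has (counting multiplicities) $n_+$ roots with positive imaginary part, $n_-$ roots with negative imaginary part and $n_0<n$ real roots, and let $d:=n-2\min\{n_+,n_-\}$. Then there exist real roots $\mu_1,\ldots,\mu_d$ of $P$ and $\nu_1,\ldots,\nu_{d-1}$ of $Q$ (counting multiplicities) with $\mu_1\le\nu_1\le\mu_2\le\cdots\le\nu_{d-1}\le\mu_d$ (strict inequalities if $n_0=0$) which moreover satisfy: (i) if either $n_->n_+$ and $\lim_{x\to-\infty}P(x)/Q(x)=\infty$, or $n_-<n_+$ and $\lim_{x\to-\infty}P(x)/Q(x)=-\infty$, then $Q$ has an additional real root $\nu_0$ (i.e. $\nu_0,\nu_1,\ldots,\nu_{d-1}$ are roots of $Q$ counting multiplicities) with $\nu_0\le\mu_1$; (ii) if either $n_->n_+$ and $\lim_{x\to\infty}P(x)/Q(x)=-\infty$, or $n_-<n_+$ and $\lim_{x\to\infty}P(x)/Q(x)=\infty$, then $Q$ has an additional real root $\nu_d$ (i.e. $\nu_1,\ldots,\nu_{d-1},\nu_d$ are roots of $Q$ counting multiplicities) with $\nu_d\ge\mu_d$. If $n_0=0$, then $\nu_0<\mu_1$ and $\nu_d>\mu_d$. The same conclusion holds when instead $f(x)=x^n+a_1x^{n-1}+\cdots+a_n$ is a real polynomial with $n_+$ roots of positive real part, $n_-$ roots of negative real part, $n_0<n$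 purely imaginary roots, $d:=n-2\min(n_+,n_-)$, and $P(x):=x^n-a_2x^{n-2}+a_4x^{n-4}-\cdots$, $Q(x):=a_1x^{n-1}-a_3x^{n-3}+a_5x^{n-5}-\cdots$.
   Context: "Counting multiplicities" means that a root of multiplicity $m$ may appear up to $m$ times in the respective list of roots. *)

theory Defs
  imports Complex_Main "HOL-Computational_Algebra.Polynomial"
begin

definition nroots_in :: "complex poly \<Rightarrow> complex set \<Rightarrow> nat" where
  "nroots_in f S = (\<Sum>z\<in>{z. poly f z = 0 \<and> z \<in> S}. order z f)"

text \<open>The list xs consists of real roots of p, counting multiplicities: the product of
  the linear factors (X - x) over the list divides p.\<close>
definition roots_cm :: "real poly \<Rightarrow> real list \<Rightarrow> bool" where
  "roots_cm p xs \<longleftrightarrow> (\<Prod>x\<leftarrow>xs. [:-x, 1:]) dvd p"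

text \<open>The common conclusion of the theorem, for given n, n_+, n_-, n_0, P, Q.
  cond_i / cond_ii are the hypotheses of items (i) and (ii); the extra roots nu0 / nud
  are required to be roots of Q (jointly with nu_1..nu_{d-1}, counting multiplicities)
  only when the respective condition holds.\<close>
definition interlace_concl ::
  "nat \<Rightarrow> nat \<Rightarrow> nat \<Rightarrow> nat \<Rightarrow> real poly \<Rightarrow> real poly \<Rightarrow> bool" where
  "interlace_concl n np nm n0 P Q \<longleftrightarrow>
    (let d = n - 2 * min np nm;
         ci = ((nm > np \<and> filterlim (\<lambda>x. poly P x / poly Q x) at_top at_bot) \<or>
               (nm < np \<and> filterlim (\<lambda>x. poly P x / poly Q x) at_bot at_bot));
         cii = ((nm > np \<and> filterlim (\<lambda>x. poly P x / poly Q x) at_bot at_top) \<or>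
                (nm < np \<and> filterlim (\<lambda>x. poly P x / poly Q x) at_top at_top))
     in \<exists>mu nu nu0 nud.
          length mu = d \<and> length nu = d - 1 \<and>
          roots_cm P mu \<and>
          roots_cm Q ((if ci then [nu0] else []) @ nu @ (if cii then [nud] else [])) \<and>
          (\<forall>i < d - 1. mu ! i \<le> nu ! i \<and> nu ! i \<le> mu ! (i + 1)) \<and>
          (n0 = 0 \<longrightarrow> (\<forall>i < d - 1. mu ! i < nu ! i \<and> nu ! i < mu ! (i + 1))) \<and>
          (ci \<longrightarrow> nu0 \<le> mu ! 0 \<and> (n0 = 0 \<longrightarrow> nu0 < mu ! 0)) \<and>
          (cii \<longrightarrow> mu ! (d - 1) \<le> nud \<and> (n0 = 0 \<longrightarrow> mu ! (d - 1) < nud)))"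

text \<open>For f(x) = x^n + a_1 x^(n-1) + ... + a_n (a_k = coeff f (n-k)):
  P(x) = x^n - a_2 x^(n-2) + a_4 x^(n-4) - ...,
  Q(x) = a_1 x^(n-1) - a_3 x^(n-3) + a_5 x^(n-5) - ... .\<close>
definition even_part :: "nat \<Rightarrow> real poly \<Rightarrow> real poly" where
  "even_part n f = (\<Sum>k\<in>{0..n}. if even k then monom ((-1) ^ (k div 2) * coeff f (n - k)) (n - k) else 0)"

definition odd_part :: "nat \<Rightarrow> real poly \<Rightarrow> real poly" where
  "odd_part n f = (\<Sum>k\<in>{0..n}. if odd k then monom ((-1) ^ (k div 2) * coeff f (n - k)) (n - k) else 0)"

end

theory Submission
  imports Defs "HOL-Computational_Algebra.Fundamental_Theorem_Algebra"
begin

text \<open>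
  Write f = P + iQ as the product of the linear factors X - z over its roots z. A real root x of f
  is a common root of P and Q: dividing both by X - x and inserting x twice into an interlacing
  sequence of the quotients keeps the alternation, so it suffices to treat f without real roots.
  Then f(x) = \<rho>(x) e^{i\<Theta>(x)} on the real axis with \<rho> > 0 and the continuous argument
  \<Theta>(x) = \<Sum> arg (x - z), so P = \<rho> cos \<Theta> and Q = \<rho> sin \<Theta>. The argument tends to 0 at +\<infinity>
  and to -\<pi>(n_+ - n_-) at -\<infinity>; replacing Q by -Q (conjugating f) we may assume n_+ > n_-.
  By the intermediate value theorem \<Theta> passes, in increasing order, through the 2(n_+ - n_-) - 1
  multiples of \<pi>/2 strictly between these limits, which are alternately zeros of cos \<Theta> and
  sin \<Theta>, i.e. of P and of Q. As sgn (P/Q) = sgn (sin 2\<Theta>), the behaviour of P/Q at \<plusminus>\<infinity> in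
  items (i) and (ii) forces \<Theta> to reach the limit values themselves, which gives the extra roots of Q.

  For the second statement, P(z) - iQ(z) = (-i)^n f(iz) has the roots -iw for the roots w of f,
  and Im (-iw) = -Re w; so the first statement applies to P and -Q.
\<close>

section \<open>Polynomials with prescribed real and imaginary parts on the real axis\<close>

definition re_im_poly :: "real poly \<Rightarrow> real poly \<Rightarrow> complex poly" where
  "re_im_poly P Q = map_poly complex_of_real P + smult \<i> (map_poly complex_of_real Q)"

lemma poly_map_poly_of_real: "poly (map_poly of_real p) (of_real x) = of_real (poly p x)"
  by (induction p) (auto simp: map_poly_pCons)

lemma poly_re_im_poly: "poly (re_im_poly P Q) (complex_of_real x) = Complex (poly P x) (poly Q x)"
  by (simp add: re_im_poly_def poly_map_poly_of_real complex_eq_iff)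

lemma coeff_re_im_poly: "coeff (re_im_poly P Q) k = Complex (coeff P k) (coeff Q k)"
  by (simp add: re_im_poly_def coeff_map_poly complex_eq_iff)

lemma re_im_poly_eq_iff: "re_im_poly P Q = re_im_poly P' Q' \<longleftrightarrow> P = P' \<and> Q = Q'"
  by (auto simp: poly_eq_iff coeff_re_im_poly)

lemma re_im_poly_Re_Im: "re_im_poly (map_poly Re f) (map_poly Im f) = f"
  by (rule poly_eqI) (simp add: coeff_re_im_poly coeff_map_poly complex_eq_iff)

lemma map_poly_of_real_mult: "map_poly of_real (A * B) = map_poly of_real A * map_poly of_real B"
  by (rule poly_eqI) (simp add: coeff_map_poly coeff_mult)

lemma map_poly_of_real_linear_factors:
  "map_poly complex_of_real (\<Prod>x\<in>#X. [:-x, 1:]) = (\<Prod>x\<in>#X. [:-complex_of_real x, 1:])"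
  by (induction X) (simp_all del: mult_pCons_left add: map_poly_of_real_mult map_poly_pCons)

lemma re_im_poly_mult: "re_im_poly (L * P) (L * Q) = map_poly of_real L * re_im_poly P Q"
  unfolding re_im_poly_def map_poly_of_real_mult by (simp add: algebra_simps)

lemma re_im_poly_uminus: "re_im_poly P (-Q) = map_poly cnj (re_im_poly P Q)"
  by (rule poly_eqI) (simp add: coeff_re_im_poly coeff_map_poly complex_eq_iff)

lemma map_poly_cnj_linear_factors:
  "map_poly cnj (\<Prod>z\<in>#R. [:-z, 1:]) = (\<Prod>z\<in>#image_mset cnj R. [:-z, 1:])"
proof (rule poly_eq_poly_eq_iff[THEN iffD1], rule ext)
  show "poly (map_poly cnj (\<Prod>z\<in>#R. [:-z, 1:])) x = poly (\<Prod>z\<in>#image_mset cnj R. [:-z, 1:]) x" for x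
    by (induction R) (simp_all add: poly_prod_mset)
qed

lemma re_im_poly_factor_real_roots:
  assumes fR: "re_im_poly P Q = (\<Prod>z\<in>#R. [:-z, 1:])"
  defines "L \<equiv> \<Prod>x\<in>#image_mset Re {#z\<in>#R. Im z = 0#}. [:-x, 1:]"
  obtains P0 Q0 where "P = L * P0" "Q = L * Q0"
    and "re_im_poly P0 Q0 = (\<Prod>z\<in>#{#z\<in>#R. Im z \<noteq> 0#}. [:-z, 1:])"
proof -
  define G where "G = (\<Prod>z\<in>#{#z\<in>#R. Im z \<noteq> 0#}. [:-z, 1:])"
  have "map_poly of_real L = (\<Prod>x\<in>#image_mset Re {#z\<in>#R. Im z = 0#}. [:-complex_of_real x, 1:])"
    unfolding L_def by (rule map_poly_of_real_linear_factors)
  also have "\<dots> = (\<Prod>z\<in>#{#z\<in>#R. Im z = 0#}. [:-z, 1:])"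
    by (induction R) (auto simp: complex_is_Real_iff)
  finally have "map_poly of_real L = (\<Prod>z\<in>#{#z\<in>#R. Im z = 0#}. [:-z, 1:])" .
  moreover have "(\<Prod>z\<in>#R. [:-z, 1:]) =
      (\<Prod>z\<in>#{#z\<in>#R. Im z = 0#}. [:-z, 1:]) * (\<Prod>z\<in>#{#z\<in>#R. Im z \<noteq> 0#}. [:-z, 1:])"
    by (induction R) (simp_all del: mult_pCons_left add: ac_simps)
  ultimately have "re_im_poly (L * map_poly Re G) (L * map_poly Im G) = (\<Prod>z\<in>#R. [:-z, 1:])"
    unfolding re_im_poly_mult re_im_poly_Re_Im G_def by simp
  then show ?thesis
    using that[of "map_poly Re G" "map_poly Im G"] re_im_poly_Re_Im[of G]
    unfolding fR[symmetric] re_im_poly_eq_iff G_def by blast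
qed

lemma re_im_poly_monic:
  assumes "degree P = n" "lead_coeff P = 1" "degree Q < n"
  shows "degree (re_im_poly P Q) = n" "lead_coeff (re_im_poly P Q) = 1"
proof -
  have "coeff (re_im_poly P Q) n = 1"
    using assms by (simp add: coeff_re_im_poly coeff_eq_0 one_complex.code)
  moreover have "degree (re_im_poly P Q) \<le> n"
    using assms by (intro degree_le) (simp add: coeff_re_im_poly coeff_eq_0 complex_eq_iff)
  ultimately show "degree (re_im_poly P Q) = n"
    by (metis le_antisym le_degree one_neq_zero)
  with \<open>coeff (re_im_poly P Q) n = 1\<close> show "lead_coeff (re_im_poly P Q) = 1"
    by simp
qed

lemma monic_linear_factors_proots:
  fixes f :: "complex poly"
  assumes "lead_coeff f = 1"
  shows "f = (\<Prod>z\<in>#proots f. [:-z, 1:])"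
  using complex_poly_decompose_multiset[of f] assms by simp

lemma nroots_in_eq_size_proots:
  assumes "f \<noteq> 0"
  shows "nroots_in f S = size {#z\<in>#proots f. z \<in> S#}"
proof -
  have "size {#z\<in>#proots f. z \<in> S#} = (\<Sum>z\<in>set_mset {#z\<in>#proots f. z \<in> S#}. count {#z\<in>#proots f. z \<in> S#} z)"
    by (rule size_multiset_overloaded_eq)
  also have "\<dots> = (\<Sum>z\<in>{z. poly f z = 0 \<and> z \<in> S}. order z f)"
    using assms by (intro sum.cong) auto
  finally show ?thesis
    by (simp add: nroots_in_def)
qed

definition extra_root_below :: "nat \<Rightarrow> nat \<Rightarrow> real poly \<Rightarrow> real poly \<Rightarrow> bool" where
  "extra_root_below np nm P Q \<longleftrightarrow>
     (nm > np \<and> filterlim (\<lambda>x. poly P x / poly Q x) at_top at_bot) \<or>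
     (nm < np \<and> filterlim (\<lambda>x. poly P x / poly Q x) at_bot at_bot)"

definition extra_root_above :: "nat \<Rightarrow> nat \<Rightarrow> real poly \<Rightarrow> real poly \<Rightarrow> bool" where
  "extra_root_above np nm P Q \<longleftrightarrow>
     (nm > np \<and> filterlim (\<lambda>x. poly P x / poly Q x) at_bot at_top) \<or>
     (nm < np \<and> filterlim (\<lambda>x. poly P x / poly Q x) at_top at_top)"

lemma interlace_concl_def':
  "interlace_concl n np nm n0 P Q \<longleftrightarrow>
    (let d = n - 2 * min np nm; ci = extra_root_below np nm P Q; cii = extra_root_above np nm P Q
     in \<exists>mu nu nu0 nud.
          length mu = d \<and> length nu = d - 1 \<and>
          roots_cm P mu \<and>
          roots_cm Q ((if ci then [nu0] else []) @ nu @ (if cii then [nud] else [])) \<and>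
          (\<forall>i < d - 1. mu ! i \<le> nu ! i \<and> nu ! i \<le> mu ! (i + 1)) \<and>
          (n0 = 0 \<longrightarrow> (\<forall>i < d - 1. mu ! i < nu ! i \<and> nu ! i < mu ! (i + 1))) \<and>
          (ci \<longrightarrow> nu0 \<le> mu ! 0 \<and> (n0 = 0 \<longrightarrow> nu0 < mu ! 0)) \<and>
          (cii \<longrightarrow> mu ! (d - 1) \<le> nud \<and> (n0 = 0 \<longrightarrow> mu ! (d - 1) < nud)))"
  unfolding interlace_concl_def extra_root_below_def extra_root_above_def ..

lemma extra_root_uminus:
  "extra_root_below nm np P (-Q) = extra_root_below np nm P Q"
  "extra_root_above nm np P (-Q) = extra_root_above np nm P Q"
proof -
  have ratio: "(\<lambda>x. poly P x / poly (-Q) x) = (\<lambda>x. - (poly P x / poly Q x))"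
    by simp
  have "filterlim (\<lambda>x. poly P x / poly (-Q) x) at_top F \<longleftrightarrow> filterlim (\<lambda>x. poly P x / poly Q x) at_bot F"
    and "filterlim (\<lambda>x. poly P x / poly (-Q) x) at_bot F \<longleftrightarrow> filterlim (\<lambda>x. poly P x / poly Q x) at_top F"
    for F
    unfolding ratio by (rule filterlim_uminus_at_bot[symmetric], rule filterlim_uminus_at_top[symmetric])
  then show "extra_root_below nm np P (-Q) = extra_root_below np nm P Q"
    and "extra_root_above nm np P (-Q) = extra_root_above np nm P Q"
    unfolding extra_root_below_def extra_root_above_def by blast+
qed

lemma extra_root_mult:
  assumes "L \<noteq> 0"
  shows "extra_root_below np nm (L * P) (L * Q) = extra_root_below np nm P Q"
    and "extra_root_above np nm (L * P) (L * Q) = extra_root_above np nm P Q"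
proof -
  have "eventually (\<lambda>x. poly (L * P) x / poly (L * Q) x = poly P x / poly Q x) at_infinity"
    using poly_eventually_not_zero[OF assms] by eventually_elim simp
  then have bot: "eventually (\<lambda>x. poly (L * P) x / poly (L * Q) x = poly P x / poly Q x) at_bot"
    and top: "eventually (\<lambda>x. poly (L * P) x / poly (L * Q) x = poly P x / poly Q x) at_top"
    using filter_leD[OF at_bot_le_at_infinity] filter_leD[OF at_top_le_at_infinity] by blast+
  show "extra_root_below np nm (L * P) (L * Q) = extra_root_below np nm P Q"
    unfolding extra_root_below_def using filterlim_cong[OF refl refl bot] by auto
  show "extra_root_above np nm (L * P) (L * Q) = extra_root_above np nm P Q"
    unfolding extra_root_above_def using filterlim_cong[OF refl refl top] by auto
qed

lemma interlace_concl_uminus: "interlace_concl n nm np n0 P (-Q) = interlace_concl n np nm n0 P Q"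
  unfolding interlace_concl_def' Let_def extra_root_uminus roots_cm_def dvd_minus_iff min.commute[of nm np] ..

section \<open>Alternating sequences of roots\<close>

text \<open>
  s 0 \<le> \<dots> \<le> s (M - 1) are roots of P and Q counted with multiplicity, alternately, starting
  with a root of P if c = 0 and with a root of Q if c = 1.
\<close>

definition alternating_roots ::
  "real poly \<Rightarrow> real poly \<Rightarrow> nat \<Rightarrow> nat \<Rightarrow> (nat \<Rightarrow> real) \<Rightarrow> bool \<Rightarrow> bool" where
  "alternating_roots P Q c M s strict \<longleftrightarrow>
     mono_on {..<M} s \<and> (strict \<longrightarrow> strict_mono_on {..<M} s) \<and>
     roots_cm P (map s (filter (\<lambda>i. even (i + c)) [0..<M])) \<and>
     roots_cm Q (map s (filter (\<lambda>i. odd (i + c)) [0..<M]))"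

lemma roots_cm_iff_mset: "roots_cm p xs \<longleftrightarrow> (\<Prod>x\<in>#mset xs. [:-x, 1:]) dvd p"
  by (simp add: roots_cm_def flip: prod_mset_prod_list mset_map)

lemma roots_cm_linear_factor_mult:
  assumes "mset ys = add_mset r (mset xs)" "roots_cm p xs"
  shows "roots_cm ([:-r, 1:] * p) ys"
  using assms unfolding roots_cm_iff_mset by (simp del: mult_pCons_left add: mult_dvd_mono)

lemma roots_cm_of_distinct_roots:
  "distinct xs \<Longrightarrow> \<forall>x\<in>set xs. poly p x = 0 \<Longrightarrow> roots_cm p xs"
proof (induction xs arbitrary: p)
  case (Cons x xs)
  obtain q where q: "p = [:-x, 1:] * q"
    using Cons.prems by (auto simp: poly_eq_0_iff_dvd elim: dvdE)
  have "roots_cm q xs"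
    using Cons unfolding q by auto
  then show ?case
    unfolding q roots_cm_def by (simp del: mult_pCons_left add: mult_dvd_mono)
qed (simp add: roots_cm_def)

lemma alternating_roots_uminus: "alternating_roots P (-Q) c M s strict = alternating_roots P Q c M s strict"
  by (simp add: alternating_roots_def roots_cm_def)

lemma mset_map_filter_insert_twice:
  fixes s s' :: "nat \<Rightarrow> 'a"
  assumes E: "\<And>i. E (Suc (Suc i)) = E i" "\<And>i. E (Suc i) \<longleftrightarrow> \<not> E i" and "j \<le> M"
    and "\<And>i. i < j \<Longrightarrow> s' i = s i" "s' j = r" "s' (Suc j) = r"
    and "\<And>i. j \<le> i \<Longrightarrow> s' (Suc (Suc i)) = s i"
  shows "mset (map s' (filter E [0..<M + 2])) = add_mset r (mset (map s (filter E [0..<M])))"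
proof -
  have "[j..<M + 2] = [j, Suc j] @ [Suc (Suc j)..<Suc (Suc M)]"
    using \<open>j \<le> M\<close> by (simp add: upt_conv_Cons del: upt_Suc)
  also have "[Suc (Suc j)..<Suc (Suc M)] = map (\<lambda>i. Suc (Suc i)) [j..<M]"
    by (induction M) auto
  finally have split: "[0..<M + 2] = [0..<j] @ [j, Suc j] @ map (\<lambda>i. Suc (Suc i)) [j..<M]"
    using \<open>j \<le> M\<close> upt_add_eq_append[of 0 j "M + 2 - j"] by simp
  have head: "map s' (filter E [0..<j]) = map s (filter E [0..<j])"
    using assms(4) by simp
  have tail: "map s' (filter E (map (\<lambda>i. Suc (Suc i)) [j..<M])) = map s (filter E [j..<M])"
    using assms(7) by (simp add: filter_map comp_def E(1))
  have middle: "mset (map s' (filter E [j, Suc j])) = {#r#}"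
    using E(2)[of j] assms(5,6) by auto
  have "[0..<M] = [0..<j] @ [j..<M]"
    using \<open>j \<le> M\<close> upt_add_eq_append[of 0 j "M - j"] by simp
  then show ?thesis
    unfolding split filter_append map_append mset_append head tail middle by simp
qed

lemma mono_on_insert_twice:
  fixes s :: "nat \<Rightarrow> real"
  assumes mono: "mono_on {..<M} s" and "j \<le> M"
    and below: "\<And>i. i < j \<Longrightarrow> s i < r" and above: "\<And>i. j \<le> i \<Longrightarrow> i < M \<Longrightarrow> r \<le> s i"
  shows "mono_on {..<M + 2} (\<lambda>i. if i < j then s i else if i < j + 2 then r else s (i - 2))"
proof (rule mono_onI)
  fix i i' assume "i \<in> {..<M + 2}" "i' \<in> {..<M + 2}" "i \<le> i'"
  then consider "i' < j" | "i < j" "j \<le> i'" | "j \<le> i"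
    by linarith
  then show "(if i < j then s i else if i < j + 2 then r else s (i - 2)) \<le>
      (if i' < j then s i' else if i' < j + 2 then r else s (i' - 2))"
  proof cases
    case 1
    then show ?thesis
      using mono_onD[OF mono, of i i'] \<open>i \<le> i'\<close> \<open>j \<le> M\<close> by simp
  next
    case 2
    then show ?thesis
      using below[of i] above[of "i' - 2"] \<open>i' \<in> {..<M + 2}\<close> by force
  next
    case 3
    then show ?thesis
      using above[of "i' - 2"] mono_onD[OF mono, of "i - 2" "i' - 2"] \<open>i \<le> i'\<close> \<open>i' \<in> {..<M + 2}\<close>
      by auto
  qed
qed

text \<open>A common root of P and Q is inserted twice at its place in the order, which keeps the parities.\<close>

lemma alternating_roots_insert_double_root:
  assumes "alternating_roots P Q c M s strict"
  shows "\<exists>s'. alternating_roots ([:-r, 1:] * P) ([:-r, 1:] * Q) c (M + 2) s' False"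
proof -
  have mono: "mono_on {..<M} s" and P: "roots_cm P (map s (filter (\<lambda>i. even (i + c)) [0..<M]))"
    and Q: "roots_cm Q (map s (filter (\<lambda>i. odd (i + c)) [0..<M]))"
    using assms by (auto simp: alternating_roots_def)
  define j where "j = (LEAST i. i = M \<or> r \<le> s i)"
  have "j \<le> M"
    unfolding j_def by (rule Least_le) simp
  have below: "s i < r" if "i < j" for i
    using not_less_Least[OF that[unfolded j_def]] by auto
  have above: "r \<le> s i" if "j \<le> i" "i < M" for i
  proof -
    have "j = M \<or> r \<le> s j"
      unfolding j_def by (rule LeastI[of _ M]) simp
    then show ?thesis
      using that mono_onD[OF mono, of j i] by auto
  qed
  define s' where "s' i = (if i < j then s i else if i < j + 2 then r else s (i - 2))" for i
  have "mono_on {..<M + 2} s'"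
    unfolding s'_def[abs_def] using mono \<open>j \<le> M\<close> below above by (rule mono_on_insert_twice)
  moreover have "mset (map s' (filter E [0..<M + 2])) = add_mset r (mset (map s (filter E [0..<M])))"
    if "E = (\<lambda>i. even (i + c)) \<or> E = (\<lambda>i. odd (i + c))" for E
    by (rule mset_map_filter_insert_twice[OF _ _ \<open>j \<le> M\<close>]) (use that in \<open>auto simp: s'_def\<close>)
  ultimately have "alternating_roots ([:-r, 1:] * P) ([:-r, 1:] * Q) c (M + 2) s' False"
    unfolding alternating_roots_def using P Q by (blast intro: roots_cm_linear_factor_mult)
  then show ?thesis
    by blast
qed

lemma alternating_roots_mult_linear_factors:
  assumes "alternating_roots P Q c M s strict"
  shows "\<exists>s'. alternating_roots ((\<Prod>x\<in>#X. [:-x, 1:]) * P) ((\<Prod>x\<in>#X. [:-x, 1:]) * Q)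
           c (M + 2 * size X) s' (strict \<and> X = {#})"
proof (induction X)
  case empty
  then show ?case
    using assms by auto
next
  case (add x X)
  then obtain s' where "alternating_roots ((\<Prod>x\<in>#X. [:-x, 1:]) * P) ((\<Prod>x\<in>#X. [:-x, 1:]) * Q)
      c (M + 2 * size X) s' (strict \<and> X = {#})"
    by blast
  from alternating_roots_insert_double_root[OF this, of x] show ?case
    by (simp del: mult_pCons_left add: mult.assoc)
qed

lemma filter_even_upt:
  assumes "c \<le> 1"
  shows "filter (\<lambda>i. even (i + c)) [0..<c + 2 * d] = map (\<lambda>i. c + 2 * i) [0..<d]"
proof (induction d)
  case (Suc d)
  have "c + 2 * Suc d = Suc (Suc (c + 2 * d))"
    by simp
  then show ?case
    using Suc assms by (auto simp del: upt_Suc simp add: upt_Suc_append)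
qed (use assms in \<open>cases c, auto\<close>)

lemma filter_odd_upt:
  assumes "c \<le> 1"
  shows "filter (\<lambda>i. odd (i + c)) [0..<c + 2 * d + 1] =
    (if c = 1 then [0] else []) @ map (\<lambda>i. c + 2 * i + 1) [0..<d]"
proof (induction d)
  case 0
  then show ?case
    using assms by (cases c) auto
next
  case (Suc d)
  have "c + 2 * Suc d + 1 = Suc (Suc (c + 2 * d + 1))"
    by simp
  then show ?case
    using Suc assms by (auto simp del: upt_Suc simp add: upt_Suc_append)
qed

lemma filter_even_alternating:
  assumes "c \<le> 1" "e \<le> 1" "d \<ge> 1"
  shows "filter (\<lambda>i. even (i + c)) [0..<c + 2 * d - 1 + e] = map (\<lambda>i. c + 2 * i) [0..<d]"
proof -
  obtain d' where d': "d = Suc d'"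
    using assms by (cases d) auto
  consider "e = 1" | "e = 0"
    using assms by linarith
  then show ?thesis
  proof cases
    case 1
    then have "c + 2 * d - 1 + e = c + 2 * d"
      using \<open>d \<ge> 1\<close> by simp
    then show ?thesis
      using filter_even_upt[OF \<open>c \<le> 1\<close>, of d] by simp
  next
    case 2
    then have "c + 2 * d - 1 + e = Suc (c + 2 * d')"
      using d' by simp
    then show ?thesis
      using filter_even_upt[OF \<open>c \<le> 1\<close>, of d'] d' by (simp del: upt_Suc add: upt_Suc_append)
  qed
qed

lemma filter_odd_alternating:
  assumes "c \<le> 1" "e \<le> 1" "d \<ge> 1"
  shows "filter (\<lambda>i. odd (i + c)) [0..<c + 2 * d - 1 + e] =
    (if c = 1 then [0] else []) @ map (\<lambda>i. c + 2 * i + 1) [0..<d - 1] @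
    (if e = 1 then [c + 2 * d - 1] else [])"
proof -
  obtain d' where d': "d = Suc d'"
    using assms by (cases d) auto
  consider "e = 1" | "e = 0"
    using assms by linarith
  then show ?thesis
  proof cases
    case 1
    then have "c + 2 * d - 1 + e = Suc (c + 2 * d' + 1)"
      using d' by simp
    then show ?thesis
      using filter_odd_upt[OF \<open>c \<le> 1\<close>, of d'] d' 1 by (simp del: upt_Suc add: upt_Suc_append)
  next
    case 2
    then have "c + 2 * d - 1 + e = c + 2 * d' + 1"
      using d' by simp
    then show ?thesis
      using filter_odd_upt[OF \<open>c \<le> 1\<close>, of d'] d' 2 by simp
  qed
qed

lemma alternating_roots_roots_cm:
  assumes "alternating_roots P Q c (c + 2 * d - 1 + e) s strict" and "c \<le> 1" "e \<le> 1" "d \<ge> 1"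
  shows "roots_cm P (map (\<lambda>i. s (c + 2 * i)) [0..<d])"
    and "roots_cm Q (map s ((if c = 1 then [0] else []) @ map (\<lambda>i. c + 2 * i + 1) [0..<d - 1] @
      (if e = 1 then [c + 2 * d - 1] else [])))"
  using assms(1)
  unfolding alternating_roots_def filter_even_alternating[OF assms(2-4)] filter_odd_alternating[OF assms(2-4)]
  by (simp_all add: comp_def)

lemma interlacing_lists_of_alternating_roots:
  fixes ci cii :: bool
  defines "c \<equiv> of_bool ci" and "e \<equiv> of_bool cii"
  assumes roots: "alternating_roots P Q c (c + 2 * d - 1 + e) s strict" and "d \<ge> 1"
  shows "\<exists>mu nu nu0 nud.
          length mu = d \<and> length nu = d - 1 \<and>
          roots_cm P mu \<and>
          roots_cm Q ((if ci then [nu0] else []) @ nu @ (if cii then [nud] else [])) \<and>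
          (\<forall>i < d - 1. mu ! i \<le> nu ! i \<and> nu ! i \<le> mu ! (i + 1)) \<and>
          (strict \<longrightarrow> (\<forall>i < d - 1. mu ! i < nu ! i \<and> nu ! i < mu ! (i + 1))) \<and>
          (ci \<longrightarrow> nu0 \<le> mu ! 0 \<and> (strict \<longrightarrow> nu0 < mu ! 0)) \<and>
          (cii \<longrightarrow> mu ! (d - 1) \<le> nud \<and> (strict \<longrightarrow> mu ! (d - 1) < nud))"
proof -
  define M where "M = c + 2 * d - 1 + e"
  have "c \<le> 1" "e \<le> 1"
    by (auto simp: c_def e_def)
  have order: "s i \<le> s j \<and> (strict \<longrightarrow> s i < s j)" if "i < j" "j < M" for i j
    using roots that unfolding alternating_roots_def M_def
    by (auto intro: mono_onD strict_mono_onD)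
  define mu where "mu = map (\<lambda>i. s (c + 2 * i)) [0..<d]"
  define nu where "nu = map (\<lambda>i. s (c + 2 * i + 1)) [0..<d - 1]"
  have "roots_cm P mu"
    using alternating_roots_roots_cm(1)[OF roots \<open>c \<le> 1\<close> \<open>e \<le> 1\<close> \<open>d \<ge> 1\<close>] by (simp add: mu_def)
  moreover have "roots_cm Q ((if ci then [s 0] else []) @ nu @ (if cii then [s (c + 2 * d - 1)] else []))"
    using alternating_roots_roots_cm(2)[OF roots \<open>c \<le> 1\<close> \<open>e \<le> 1\<close> \<open>d \<ge> 1\<close>]
    by (cases ci; cases cii) (simp_all add: nu_def c_def e_def comp_def)
  moreover have "\<forall>i < d - 1. (mu ! i \<le> nu ! i \<and> nu ! i \<le> mu ! (i + 1)) \<and>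
      (strict \<longrightarrow> mu ! i < nu ! i \<and> nu ! i < mu ! (i + 1))"
  proof (intro allI impI)
    fix i assume "i < d - 1"
    then have "mu ! i = s (c + 2 * i)" "nu ! i = s (c + 2 * i + 1)" "mu ! (i + 1) = s (c + 2 * i + 2)"
      and "c + 2 * i + 2 < M"
      by (auto simp: mu_def nu_def M_def)
    then show "(mu ! i \<le> nu ! i \<and> nu ! i \<le> mu ! (i + 1)) \<and>
      (strict \<longrightarrow> mu ! i < nu ! i \<and> nu ! i < mu ! (i + 1))"
      using order[of "c + 2 * i" "c + 2 * i + 1"] order[of "c + 2 * i + 1" "c + 2 * i + 2"] by auto
  qed
  moreover have "ci \<longrightarrow> s 0 \<le> mu ! 0 \<and> (strict \<longrightarrow> s 0 < mu ! 0)"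
    using order[of 0 1] \<open>d \<ge> 1\<close> by (auto simp: mu_def M_def c_def)
  moreover have "cii \<longrightarrow> mu ! (d - 1) \<le> s (c + 2 * d - 1) \<and> (strict \<longrightarrow> mu ! (d - 1) < s (c + 2 * d - 1))"
    using order[of "c + 2 * (d - 1)" "c + 2 * d - 1"] \<open>d \<ge> 1\<close> by (auto simp: mu_def M_def e_def)
  moreover have "length mu = d" "length nu = d - 1"
    by (auto simp: mu_def nu_def)
  ultimately show ?thesis
    by blast
qed

section \<open>A continuous argument along the real axis\<close>

text \<open>A continuous branch of arg (x - z) for real x, with values in (-\<pi>, 0) if Im z > 0.\<close>

definition root_angle :: "complex \<Rightarrow> real \<Rightarrow> real" where
  "root_angle z x = sgn (Im z) * (arctan ((x - Re z) / \<bar>Im z\<bar>) - pi / 2)"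

lemma cis_root_angle:
  assumes "Im z \<noteq> 0"
  shows "complex_of_real x - z = complex_of_real (cmod (complex_of_real x - z)) * cis (root_angle z x)"
proof -
  define u where "u = x - Re z"
  define v where "v = Im z"
  define r where "r = sqrt (u\<^sup>2 + v\<^sup>2)"
  have "v \<noteq> 0" and "r > 0"
    using assms by (auto simp: v_def r_def add_nonneg_pos)
  have r_cmod: "cmod (complex_of_real x - z) = r"
    by (simp add: cmod_def r_def u_def v_def)
  have sqrt_eq: "sqrt (1 + (u / \<bar>v\<bar>)\<^sup>2) = r / \<bar>v\<bar>"
    using \<open>v \<noteq> 0\<close> by (simp add: r_def power_divide field_simps real_sqrt_divide)
  have sgn_cases: "sgn v = 1 \<or> sgn v = -1"
    using \<open>v \<noteq> 0\<close> by (simp add: sgn_real_def)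
  have "cos (root_angle z x) = sin (arctan (u / \<bar>v\<bar>))"
    using sgn_cases by (auto simp: root_angle_def u_def v_def cos_diff)
  also have "\<dots> = u / r"
    using \<open>v \<noteq> 0\<close> \<open>r > 0\<close> by (simp add: sin_arctan sqrt_eq)
  finally have cos: "cos (root_angle z x) = u / r" .
  have "sin (root_angle z x) = - sgn v * cos (arctan (u / \<bar>v\<bar>))"
    using sgn_cases by (auto simp: root_angle_def u_def v_def sin_diff)
  also have "\<dots> = - v / r"
    using \<open>v \<noteq> 0\<close> \<open>r > 0\<close> by (simp add: cos_arctan sqrt_eq sgn_real_def)
  finally have sin: "sin (root_angle z x) = - v / r" .
  show ?thesis
    using \<open>r > 0\<close> by (simp add: complex_eq_iff r_cmod cos sin u_def v_def)
qed

lemma filterlim_divide_pos_const: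
  fixes a c :: real
  assumes "a > 0"
  shows "filterlim (\<lambda>x. (x - c) / a) at_top at_top" and "filterlim (\<lambda>x. (x - c) / a) at_bot at_bot"
proof -
  show "filterlim (\<lambda>x. (x - c) / a) at_top at_top"
    unfolding filterlim_at_top eventually_at_top_linorder
    by (intro allI exI[of _ "\<lambda>Z. Z * a + c"]) (use assms in \<open>auto simp: field_simps\<close>)
  show "filterlim (\<lambda>x. (x - c) / a) at_bot at_bot"
    unfolding filterlim_at_bot eventually_at_bot_linorder
    by (intro allI exI[of _ "\<lambda>Z. Z * a + c"]) (use assms in \<open>auto simp: field_simps\<close>)
qed

lemma root_angle_at_top:
  assumes "Im z \<noteq> 0"
  shows "(root_angle z \<longlongrightarrow> 0) at_top"
proof -
  have "((\<lambda>x. arctan ((x - Re z) / \<bar>Im z\<bar>)) \<longlongrightarrow> pi / 2) at_top"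
    using assms by (intro filterlim_compose[OF tendsto_arctan_at_top] filterlim_divide_pos_const) auto
  then have "(root_angle z \<longlongrightarrow> sgn (Im z) * (pi / 2 - pi / 2)) at_top"
    unfolding root_angle_def[abs_def] by (intro tendsto_intros)
  then show ?thesis
    by simp
qed

lemma root_angle_at_bot:
  assumes "Im z \<noteq> 0"
  shows "(root_angle z \<longlongrightarrow> - sgn (Im z) * pi) at_bot"
proof -
  have "((\<lambda>x. arctan ((x - Re z) / \<bar>Im z\<bar>)) \<longlongrightarrow> - (pi / 2)) at_bot"
    using assms by (intro filterlim_compose[OF tendsto_arctan_at_bot] filterlim_divide_pos_const) auto
  then have "(root_angle z \<longlongrightarrow> sgn (Im z) * (- (pi / 2) - pi / 2)) at_bot"
    unfolding root_angle_def[abs_def] by (intro tendsto_intros)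
  then show ?thesis
    by simp
qed

lemma continuous_on_root_angle: "Im z \<noteq> 0 \<Longrightarrow> continuous_on UNIV (root_angle z)"
  unfolding root_angle_def[abs_def] by (intro continuous_intros) auto

lemma poly_linear_factors_polar:
  assumes "\<forall>z\<in>#R. Im z \<noteq> 0"
  shows "poly (\<Prod>z\<in>#R. [:-z, 1:]) (complex_of_real x) =
    complex_of_real (\<Prod>z\<in>#R. cmod (complex_of_real x - z)) * cis (\<Sum>z\<in>#R. root_angle z x)"
  using assms
proof (induction R)
  case (add z R)
  have "poly (\<Prod>z\<in>#add_mset z R. [:-z, 1:]) (complex_of_real x) =
      (complex_of_real x - z) * poly (\<Prod>z\<in>#R. [:-z, 1:]) (complex_of_real x)"
    by (simp add: algebra_simps)
  also have "\<dots> = complex_of_real (cmod (complex_of_real x - z)) * cis (root_angle z x) *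
      (complex_of_real (\<Prod>z\<in>#R. cmod (complex_of_real x - z)) * cis (\<Sum>z\<in>#R. root_angle z x))"
    using add cis_root_angle[of z x] by simp
  also have "\<dots> = complex_of_real (\<Prod>z\<in>#add_mset z R. cmod (complex_of_real x - z)) *
      cis (\<Sum>z\<in>#add_mset z R. root_angle z x)"
    by (simp add: cis_mult[symmetric] ac_simps)
  finally show ?case .
qed simp

lemma continuous_on_sum_root_angle:
  "\<forall>z\<in>#R. Im z \<noteq> 0 \<Longrightarrow> continuous_on UNIV (\<lambda>x. \<Sum>z\<in>#R. root_angle z x)"
  by (induction R) (auto intro!: continuous_intros continuous_on_root_angle)

lemma sum_root_angle_at_top:
  "\<forall>z\<in>#R. Im z \<noteq> 0 \<Longrightarrow> ((\<lambda>x. \<Sum>z\<in>#R. root_angle z x) \<longlongrightarrow> 0) at_top"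
  by (induction R) (auto intro!: tendsto_add_zero root_angle_at_top)

lemma sum_root_angle_at_bot:
  "\<forall>z\<in>#R. Im z \<noteq> 0 \<Longrightarrow> ((\<lambda>x. \<Sum>z\<in>#R. root_angle z x) \<longlongrightarrow>
     - pi * (real (size {#z\<in>#R. Im z > 0#}) - real (size {#z\<in>#R. Im z < 0#}))) at_bot"
proof (induction R)
  case (add z R)
  then have "((\<lambda>x. root_angle z x + (\<Sum>z\<in>#R. root_angle z x)) \<longlongrightarrow>
      - sgn (Im z) * pi + - pi * (real (size {#z\<in>#R. Im z > 0#}) - real (size {#z\<in>#R. Im z < 0#}))) at_bot"
    by (intro tendsto_add root_angle_at_bot) auto
  then show ?case
    using add.prems by (auto simp: sgn_real_def algebra_simps)
qed simp

lemma polar_form_on_real_axis: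
  assumes fR: "re_im_poly P Q = (\<Prod>z\<in>#R. [:-z, 1:])" and nonreal: "\<forall>z\<in>#R. Im z \<noteq> 0"
  obtains \<rho> where "\<And>x. \<rho> x > 0"
    and "\<And>x. poly P x = \<rho> x * cos (\<Sum>z\<in>#R. root_angle z x)"
    and "\<And>x. poly Q x = \<rho> x * sin (\<Sum>z\<in>#R. root_angle z x)"
proof
  show "(\<Prod>z\<in>#R. cmod (complex_of_real x - z)) > 0" for x
    using nonreal by (induction R) (auto simp: complex_eq_iff)
  show "poly P x = (\<Prod>z\<in>#R. cmod (complex_of_real x - z)) * cos (\<Sum>z\<in>#R. root_angle z x)"
    and "poly Q x = (\<Prod>z\<in>#R. cmod (complex_of_real x - z)) * sin (\<Sum>z\<in>#R. root_angle z x)" for x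
    using poly_linear_factors_polar[OF nonreal, of x] unfolding fR[symmetric] poly_re_im_poly
    by (simp_all add: complex_eq_iff)
qed

lemma sgn_sin_double:
  fixes t :: real
  assumes "\<bar>t\<bar> < pi / 2"
  shows "sgn (sin (2 * t)) = sgn t"
proof -
  have "cos t > 0"
    using assms by (intro cos_gt_zero_pi) auto
  moreover have "sgn (sin t) = sgn t"
  proof (cases t "0::real" rule: linorder_cases)
    case less
    then have "sin (- t) > 0"
      using assms by (intro sin_gt_zero) auto
    then show ?thesis
      using less by simp
  next
    case greater
    then have "sin t > 0"
      using assms by (intro sin_gt_zero) auto
    then show ?thesis
      using greater by simp
  qed simp
  ultimately show ?thesis
    by (simp add: sin_double sgn_mult)
qed

lemma sgn_divide_polar:
  fixes \<rho> t :: real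
  assumes "\<rho> > 0"
  shows "sgn (\<rho> * cos t / (\<rho> * sin t)) = sgn (sin (2 * t))"
proof -
  have "sgn (a / b) = sgn (a * b)" for a b :: real
    by (simp add: sgn_real_def zero_less_divide_iff zero_less_mult_iff divide_less_0_iff mult_less_0_iff)
  then have "sgn (\<rho> * cos t / (\<rho> * sin t)) = sgn (\<rho> * cos t * (\<rho> * sin t))" .
  also have "\<rho> * cos t * (\<rho> * sin t) = \<rho>\<^sup>2 / 2 * sin (2 * t)"
    by (simp add: sin_double power2_eq_square)
  finally show ?thesis
    using assms by (simp add: sgn_mult)
qed

lemma eventually_angle_sign:
  fixes \<Theta> r :: "'a \<Rightarrow> real"
  assumes lim: "(\<Theta> \<longlongrightarrow> pi * of_int k) F" and sgn: "\<And>x. sgn (r x) = sgn (sin (2 * \<Theta> x))"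
  shows "filterlim r at_top F \<Longrightarrow> eventually (\<lambda>x. pi * of_int k < \<Theta> x) F"
    and "filterlim r at_bot F \<Longrightarrow> eventually (\<lambda>x. \<Theta> x < pi * of_int k) F"
proof -
  have "eventually (\<lambda>x. dist (\<Theta> x) (pi * of_int k) < pi / 2) F"
    using lim by (rule tendstoD) simp
  then have same_sgn: "eventually (\<lambda>x. sgn (\<Theta> x - pi * of_int k) = sgn (r x)) F"
  proof eventually_elim
    case (elim x)
    have "sin (2 * (\<Theta> x - pi * of_int k)) = sin (2 * \<Theta> x - 2 * pi * of_int k)"
      by (simp add: algebra_simps)
    also have "\<dots> = sin (2 * \<Theta> x)"
      by (simp add: sin_diff)
    finally show ?case
      using elim sgn_sin_double[of "\<Theta> x - pi * of_int k"] sgn[of x] by (simp add: dist_real_def)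
  qed
  show "eventually (\<lambda>x. pi * of_int k < \<Theta> x) F" if "filterlim r at_top F"
    using same_sgn that[unfolded filterlim_at_top_dense, rule_format, of 0]
    by eventually_elim (simp add: sgn_real_def split: if_splits)
  show "eventually (\<lambda>x. \<Theta> x < pi * of_int k) F" if "filterlim r at_bot F"
    using same_sgn that[unfolded filterlim_at_bot_dense, rule_format, of 0]
    by eventually_elim (simp add: sgn_real_def split: if_splits)
qed

section \<open>Intermediate values at increasing levels\<close>

lemma continuous_on_attains_at_top:
  fixes \<phi> :: "real \<Rightarrow> real"
  assumes "continuous_on UNIV \<phi>" "\<phi> a \<le> l" "eventually (\<lambda>x. l < \<phi> x) at_top"
  shows "\<exists>y\<ge>a. \<phi> y = l"
proof -
  obtain b where "b \<ge> a" "l < \<phi> b"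
    using assms(3) unfolding eventually_at_top_linorder by (meson linorder_le_cases order_refl)
  then have "\<exists>y. a \<le> y \<and> y \<le> b \<and> \<phi> y = l"
    using assms by (intro IVT') (auto intro: continuous_on_subset)
  then show ?thesis
    by blast
qed

lemma continuous_on_attains_increasing_levels:
  fixes \<phi> :: "real \<Rightarrow> real" and L :: "nat \<Rightarrow> real"
  assumes cont: "continuous_on UNIV \<phi>" and "strict_mono L"
    and bot: "eventually (\<lambda>x. \<phi> x < L 0) at_bot" and top: "eventually (\<lambda>x. L m < \<phi> x) at_top"
  shows "\<exists>s. strict_mono_on {..m} s \<and> (\<forall>a\<le>m. \<phi> (s a) = L a)"
  using top
proof (induction m)
  case 0
  obtain x where "\<phi> x < L 0"
    using bot unfolding eventually_at_bot_linorder by auto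
  with continuous_on_attains_at_top[OF cont _ "0.prems"] obtain y where "\<phi> y = L 0"
    by (meson less_imp_le)
  then have "strict_mono_on {..0::nat} (\<lambda>_. y) \<and> (\<forall>a\<le>0. \<phi> y = L a)"
    by (auto simp: strict_mono_on_def)
  then show ?case
    by blast
next
  case (Suc m)
  have "L m < L (Suc m)"
    using \<open>strict_mono L\<close> by (simp add: strict_mono_Suc_iff)
  then have "eventually (\<lambda>x. L m < \<phi> x) at_top"
    using Suc.prems by (auto elim: eventually_mono)
  then obtain s where s: "strict_mono_on {..m} s" "\<forall>a\<le>m. \<phi> (s a) = L a"
    using Suc.IH by blast
  have "\<phi> (s m) \<le> L (Suc m)"
    using s(2) \<open>L m < L (Suc m)\<close> by simp
  then obtain y where y: "y \<ge> s m" "\<phi> y = L (Suc m)"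
    using continuous_on_attains_at_top[OF cont _ Suc.prems] by blast
  then have "s m < y"
    using s(2) \<open>L m < L (Suc m)\<close> by (cases "y = s m") auto
  have "strict_mono_on {..Suc m} (s(Suc m := y))"
  proof (rule strict_mono_onI)
    fix a b assume "a \<in> {..Suc m}" "b \<in> {..Suc m}" "a < b"
    then show "(s(Suc m := y)) a < (s(Suc m := y)) b"
      using strict_mono_onD[OF s(1), of a b] strict_mono_on_leD[OF s(1), of a m] \<open>s m < y\<close>
      by (cases "b = Suc m") auto
  qed
  moreover have "\<forall>a\<le>Suc m. \<phi> ((s(Suc m := y)) a) = L a"
    using s(2) y(2) by (auto simp: le_Suc_eq)
  ultimately show ?case
    by blast
qed

text \<open>
  The levels are the multiples of \<pi>/2 strictly between the limits -\<pi>K and 0, preceded by -\<pi>K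
  itself if ci and followed by 0 if cii.
\<close>

lemma angle_attains_half_pi_levels:
  fixes \<Theta> r :: "real \<Rightarrow> real" and K :: nat
  assumes cont: "continuous_on UNIV \<Theta>" and top: "(\<Theta> \<longlongrightarrow> 0) at_top"
    and bot: "(\<Theta> \<longlongrightarrow> - pi * K) at_bot" and "K \<ge> 1"
    and sgn: "\<And>x. sgn (r x) = sgn (sin (2 * \<Theta> x))"
    and below: "ci \<Longrightarrow> filterlim r at_bot at_bot" and above: "cii \<Longrightarrow> filterlim r at_top at_top"
  defines "c \<equiv> of_bool ci" and "e \<equiv> of_bool cii"
  obtains s where "strict_mono_on {..<c + 2 * K - 1 + e} s"
    and "\<And>a. a < c + 2 * K - 1 + e \<Longrightarrow> \<Theta> (s a) = of_int (int a + 1 - int c - 2 * int K) * (pi / 2)"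
proof -
  define M where "M = c + 2 * K - 1 + e"
  define L where "L a = of_int (int a + 1 - int c - 2 * int K) * (pi / 2)" for a
  have top': "(\<Theta> \<longlongrightarrow> pi * of_int 0) at_top" and bot': "(\<Theta> \<longlongrightarrow> pi * of_int (- int K)) at_bot"
    using top bot by simp_all
  have "eventually (\<lambda>x. \<Theta> x < L 0) at_bot"
  proof (cases ci)
    case True
    then show ?thesis
      using eventually_angle_sign(2)[OF bot' sgn below] by (simp add: L_def c_def algebra_simps)
  next
    case False
    then show ?thesis
      using order_tendstoD(2)[OF bot, of "L 0"] by (simp add: L_def c_def algebra_simps)
  qed
  moreover have "eventually (\<lambda>x. L (M - 1) < \<Theta> x) at_top"
  proof (cases cii)
    case True
    then have "L (M - 1) = pi * of_int 0"
      using \<open>K \<ge> 1\<close> by (simp add: L_def M_def c_def e_def of_nat_diff)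
    then show ?thesis
      using eventually_angle_sign(1)[OF top' sgn above] True by simp
  next
    case False
    then have "L (M - 1) = - pi / 2"
      using \<open>K \<ge> 1\<close> by (simp add: L_def M_def c_def e_def of_nat_diff)
    then show ?thesis
      using order_tendstoD(1)[OF top, of "L (M - 1)"] by simp
  qed
  moreover have "strict_mono L"
    by (rule strict_monoI) (simp add: L_def)
  ultimately obtain s where mono: "strict_mono_on {..M - 1} s" and levels: "\<forall>a\<le>M - 1. \<Theta> (s a) = L a"
    using continuous_on_attains_increasing_levels[OF cont, of L "M - 1"] by blast
  have "{..M - 1} = {..<M}"
    using \<open>K \<ge> 1\<close> by (auto simp: M_def)
  show ?thesis
  proof (rule that)
    show "strict_mono_on {..<c + 2 * K - 1 + e} s"
      using mono \<open>{..M - 1} = {..<M}\<close> by (simp add: M_def)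
    show "\<Theta> (s a) = of_int (int a + 1 - int c - 2 * int K) * (pi / 2)" if "a < c + 2 * K - 1 + e" for a
      using levels[rule_format, of a] that unfolding M_def L_def by simp
  qed
qed

section \<open>Polynomials without real roots\<close>

lemma alternating_roots_of_angle_levels:
  assumes P: "\<And>x. poly P x = \<rho> x * cos (\<Theta> x)" and Q: "\<And>x. poly Q x = \<rho> x * sin (\<Theta> x)"
    and mono: "strict_mono_on {..<M} s" and "c \<le> 1"
    and levels: "\<And>a. a < M \<Longrightarrow> \<Theta> (s a) = of_int (int a + 1 - int c - 2 * K) * (pi / 2)"
  shows "alternating_roots P Q c M s True"
proof -
  have "poly P (s a) = 0" if "a < M" "even (a + c)" for a
  proof -
    have "odd (int a + 1 - int c - 2 * K)"
      using that by simp
    then have "cos (\<Theta> (s a)) = 0"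
      unfolding levels[OF that(1)] cos_zero_iff_int by blast
    then show ?thesis
      by (simp add: P)
  qed
  moreover have "poly Q (s a) = 0" if "a < M" "odd (a + c)" for a
  proof -
    have "even (int a + 1 - int c - 2 * K)"
      using that \<open>c \<le> 1\<close> by simp
    then obtain j where "int a + 1 - int c - 2 * K = 2 * j" ..
    then have "\<Theta> (s a) = of_int j * pi"
      unfolding levels[OF that(1)] by simp
    then have "sin (\<Theta> (s a)) = 0"
      unfolding sin_zero_iff_int2 by blast
    then show ?thesis
      by (simp add: Q)
  qed
  moreover have "distinct (map s (filter E [0..<M]))" for E
    using strict_mono_on_imp_inj_on[OF mono]
    by (intro distinct_map_filter) (simp add: distinct_map atLeast0LessThan)
  ultimately show ?thesis
    using mono unfolding alternating_roots_def
    by (auto intro!: roots_cm_of_distinct_roots strict_mono_on_imp_mono_on)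
qed

lemma alternating_roots_of_nonreal_roots_pos:
  assumes fR: "re_im_poly P Q = (\<Prod>z\<in>#R. [:-z, 1:])" and nonreal: "\<forall>z\<in>#R. Im z \<noteq> 0"
    and np: "np = size {#z\<in>#R. Im z > 0#}" and nm: "nm = size {#z\<in>#R. Im z < 0#}" and "nm < np"
  defines "c \<equiv> of_bool (extra_root_below np nm P Q)" and "e \<equiv> of_bool (extra_root_above np nm P Q)"
  shows "\<exists>s. alternating_roots P Q c (c + 2 * (np - nm) - 1 + e) s True"
proof -
  define \<Theta> where "\<Theta> x = (\<Sum>z\<in>#R. root_angle z x)" for x
  obtain \<rho> where pos: "\<And>x. \<rho> x > 0" and P: "\<And>x. poly P x = \<rho> x * cos (\<Theta> x)"
    and Q: "\<And>x. poly Q x = \<rho> x * sin (\<Theta> x)"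
    using polar_form_on_real_axis[OF fR nonreal] unfolding \<Theta>_def by blast
  have sgn: "sgn (poly P x / poly Q x) = sgn (sin (2 * \<Theta> x))" for x
    unfolding P Q using pos by (rule sgn_divide_polar)
  have cont: "continuous_on UNIV \<Theta>" and top: "(\<Theta> \<longlongrightarrow> 0) at_top"
    using continuous_on_sum_root_angle[OF nonreal] sum_root_angle_at_top[OF nonreal]
    by (simp_all add: \<Theta>_def[abs_def])
  have bot: "(\<Theta> \<longlongrightarrow> - pi * real (np - nm)) at_bot"
    using sum_root_angle_at_bot[OF nonreal] \<open>nm < np\<close> unfolding \<Theta>_def[abs_def] np[symmetric] nm[symmetric]
    by (simp add: of_nat_diff)
  have "np - nm \<ge> 1" "c \<le> 1"
    using \<open>nm < np\<close> by (simp_all add: c_def)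
  have below: "extra_root_below np nm P Q \<Longrightarrow> filterlim (\<lambda>x. poly P x / poly Q x) at_bot at_bot"
    and above: "extra_root_above np nm P Q \<Longrightarrow> filterlim (\<lambda>x. poly P x / poly Q x) at_top at_top"
    using \<open>nm < np\<close> by (simp_all add: extra_root_below_def extra_root_above_def)
  obtain s where "strict_mono_on {..<c + 2 * (np - nm) - 1 + e} s"
    and "\<And>a. a < c + 2 * (np - nm) - 1 + e \<Longrightarrow>
      \<Theta> (s a) = of_int (int a + 1 - int c - 2 * int (np - nm)) * (pi / 2)"
    using angle_attains_half_pi_levels[OF cont top bot \<open>np - nm \<ge> 1\<close> sgn below above]
    unfolding c_def e_def by blast
  then show ?thesis
    using alternating_roots_of_angle_levels[OF P Q _ \<open>c \<le> 1\<close>] by blast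
qed

lemma size_filter_Im_cnj:
  "size {#z\<in>#image_mset cnj R. Im z > 0#} = size {#z\<in>#R. Im z < 0#}"
  "size {#z\<in>#image_mset cnj R. Im z < 0#} = size {#z\<in>#R. Im z > 0#}"
  by (simp_all add: filter_mset_image_mset)

lemma alternating_roots_of_nonreal_roots:
  assumes fR: "re_im_poly P Q = (\<Prod>z\<in>#R. [:-z, 1:])" and nonreal: "\<forall>z\<in>#R. Im z \<noteq> 0"
    and np: "np = size {#z\<in>#R. Im z > 0#}" and nm: "nm = size {#z\<in>#R. Im z < 0#}" and "np \<noteq> nm"
  defines "c \<equiv> of_bool (extra_root_below np nm P Q)" and "e \<equiv> of_bool (extra_root_above np nm P Q)"
  shows "\<exists>s. alternating_roots P Q c (c + 2 * (max np nm - min np nm) - 1 + e) s True"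
proof (cases "nm < np")
  case True
  then show ?thesis
    using alternating_roots_of_nonreal_roots_pos[OF fR nonreal np nm] by (simp add: c_def e_def)
next
  case False
  have "re_im_poly P (-Q) = (\<Prod>z\<in>#image_mset cnj R. [:-z, 1:])"
    by (simp add: re_im_poly_uminus fR map_poly_cnj_linear_factors)
  moreover have "\<forall>z\<in>#image_mset cnj R. Im z \<noteq> 0"
    using nonreal by auto
  moreover have "np < nm"
    using False \<open>np \<noteq> nm\<close> by simp
  ultimately show ?thesis
    using alternating_roots_of_nonreal_roots_pos[of P "-Q" "image_mset cnj R" nm np]
    by (simp add: size_filter_Im_cnj np nm c_def e_def extra_root_uminus alternating_roots_uminus)
qed

section \<open>Common real roots of P and Q\<close>

lemma size_filter_mset_Im_split:
  "size R = size {#z\<in>#R. Im z > 0#} + size {#z\<in>#R. Im z < 0#} + size {#z\<in>#R. Im z = 0#}"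
  by (induction R) auto

lemma alternating_roots_of_linear_factors:
  assumes fR: "re_im_poly P Q = (\<Prod>z\<in>#R. [:-z, 1:])"
    and np: "np = size {#z\<in>#R. Im z > 0#}" and nm: "nm = size {#z\<in>#R. Im z < 0#}"
    and n0: "n0 = size {#z\<in>#R. Im z = 0#}"
    and d: "d = size R - 2 * min np nm" "d \<ge> 1"
  defines "c \<equiv> of_bool (extra_root_below np nm P Q)" and "e \<equiv> of_bool (extra_root_above np nm P Q)"
  shows "\<exists>s. alternating_roots P Q c (c + 2 * d - 1 + e) s (n0 = 0)"
proof -
  define X where "X = image_mset Re {#z\<in>#R. Im z = 0#}"
  define L where "L = (\<Prod>x\<in>#X. [:-x, 1:])"
  obtain P0 Q0 where PQ: "P = L * P0" "Q = L * Q0"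
    and fR0: "re_im_poly P0 Q0 = (\<Prod>z\<in>#{#z\<in>#R. Im z \<noteq> 0#}. [:-z, 1:])"
    using re_im_poly_factor_real_roots[OF fR] unfolding L_def X_def by blast
  have "L \<noteq> 0"
    by (auto simp: L_def)
  have "size X = n0"
    by (simp add: X_def n0)
  have d_eq: "d = (max np nm - min np nm) + n0"
    using size_filter_mset_Im_split[of R] d(1) np nm n0 by linarith
  have c: "c = of_bool (extra_root_below np nm P0 Q0)" and e: "e = of_bool (extra_root_above np nm P0 Q0)"
    unfolding c_def e_def PQ using extra_root_mult[OF \<open>L \<noteq> 0\<close>] by simp_all
  show ?thesis
  proof (cases "np = nm")
    case False
    have "np = size {#z\<in>#{#z\<in>#R. Im z \<noteq> 0#}. Im z > 0#}" "nm = size {#z\<in>#{#z\<in>#R. Im z \<noteq> 0#}. Im z < 0#}"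
      unfolding np nm by (induction R) auto
    then obtain s where "alternating_roots P0 Q0 c (c + 2 * (max np nm - min np nm) - 1 + e) s True"
      using alternating_roots_of_nonreal_roots[OF fR0 _ _ _ False] c e by auto
    from alternating_roots_mult_linear_factors[OF this, of X] show ?thesis
      using False \<open>size X = n0\<close> unfolding PQ d_eq L_def by (auto simp: algebra_simps)
  next
    case True
    then have "X \<noteq> {#}" "c = 0" "e = 0"
      using d \<open>size X = n0\<close> d_eq by (auto simp: c_def e_def extra_root_below_def extra_root_above_def)
    then obtain x X' where X: "X = add_mset x X'"
      by (meson multiset_cases)
    have "alternating_roots ([:-x, 1:] * P0) ([:-x, 1:] * Q0) 0 1 (\<lambda>_. x) False"
      by (simp del: mult_pCons_left add: alternating_roots_def roots_cm_def mono_on_def)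
    moreover have "L * F = (\<Prod>x\<in>#X'. [:-x, 1:]) * ([:-x, 1:] * F)" for F
      unfolding L_def X by (simp only: image_mset_add_mset prod_mset.add_mset mult_ac)
    ultimately show ?thesis
      using alternating_roots_mult_linear_factors[of _ _ 0 1 _ False X'] True \<open>size X = n0\<close>
        \<open>c = 0\<close> \<open>e = 0\<close> X
      unfolding PQ d_eq by auto
  qed
qed

lemma interlace_concl_of_linear_factors:
  assumes fR: "re_im_poly P Q = (\<Prod>z\<in>#R. [:-z, 1:])"
    and np: "np = size {#z\<in>#R. Im z > 0#}" and nm: "nm = size {#z\<in>#R. Im z < 0#}"
    and n0: "n0 = size {#z\<in>#R. Im z = 0#}"
  shows "interlace_concl (size R) np nm n0 P Q"
proof (cases "size R - 2 * min np nm \<ge> 1")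
  case True
  then obtain s where "alternating_roots P Q (of_bool (extra_root_below np nm P Q))
      (of_bool (extra_root_below np nm P Q) + 2 * (size R - 2 * min np nm) - 1 +
       of_bool (extra_root_above np nm P Q)) s (n0 = 0)"
    using alternating_roots_of_linear_factors[OF fR np nm n0 refl] by blast
  from interlacing_lists_of_alternating_roots[OF this True] show ?thesis
    unfolding interlace_concl_def' Let_def .
next
  case False
  then have "np = nm" "\<not> extra_root_below np nm P Q" "\<not> extra_root_above np nm P Q"
    using size_filter_mset_Im_split[of R] np nm n0 by (auto simp: extra_root_below_def extra_root_above_def)
  with False show ?thesis
    unfolding interlace_concl_def' Let_def by (intro exI[of _ "[]"]) (auto simp: roots_cm_def)
qed

section \<open>The two readings of the theorem\<close>

lemma interlace_concl_upper_lower_roots: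
  assumes "degree P = n" "lead_coeff P = 1" "degree Q < n"
  defines "f \<equiv> re_im_poly P Q"
  shows "interlace_concl n (nroots_in f {z. Im z > 0}) (nroots_in f {z. Im z < 0}) (nroots_in f {z. Im z = 0}) P Q"
proof -
  have "f \<noteq> 0" "f = (\<Prod>z\<in>#proots f. [:-z, 1:])" "size (proots f) = n"
    using re_im_poly_monic[OF assms(1-3)] monic_linear_factors_proots
    by (auto simp: f_def size_proots_complex)
  then show ?thesis
    using interlace_concl_of_linear_factors[of P Q "proots f"]
    by (simp add: nroots_in_eq_size_proots f_def)
qed

lemma power_minus_imaginary_unit:
  "(-\<i>) ^ k = (if even k then (-1) ^ (k div 2) else - \<i> * (-1) ^ (k div 2) :: complex)"
proof (cases "even k")
  case True
  then obtain q where "k = 2 * q"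
    by (elim evenE)
  then show ?thesis
    by (simp add: power_mult)
next
  case False
  then obtain q where "k = 2 * q + 1"
    by (elim oddE)
  then show ?thesis
    by (simp add: power_mult power_add)
qed

lemma map_poly_of_real_sum: "map_poly complex_of_real (sum F A) = (\<Sum>k\<in>A. map_poly of_real (F k))"
  by (rule poly_eqI) (simp add: coeff_map_poly coeff_sum)

lemma poly_re_im_poly_even_odd_part:
  "poly (re_im_poly (even_part n f) (- odd_part n f)) z =
     (\<Sum>k\<in>{0..n}. complex_of_real (coeff f (n - k)) * z ^ (n - k) * (-\<i>) ^ k)"
proof -
  have part: "poly (map_poly complex_of_real
        (\<Sum>k\<in>{0..n}. if E k then monom ((-1) ^ (k div 2) * coeff f (n - k)) (n - k) else 0)) z =
      (\<Sum>k\<in>{0..n}. if E k then complex_of_real ((-1) ^ (k div 2) * coeff f (n - k)) * z ^ (n - k) else 0)"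
    for E
    unfolding map_poly_of_real_sum poly_sum by (intro sum.cong) (auto simp: map_poly_monom poly_monom)
  have split: "re_im_poly (even_part n f) (- odd_part n f) =
      map_poly of_real (even_part n f) - smult \<i> (map_poly of_real (odd_part n f))"
    by (rule poly_eqI) (simp add: coeff_re_im_poly coeff_map_poly complex_eq_iff)
  show ?thesis
    unfolding split unfolding poly_diff poly_smult even_part_def odd_part_def part sum_distrib_left sum_subtractf[symmetric]
    by (intro sum.cong) (auto simp: power_minus_imaginary_unit)
qed

lemma poly_map_poly_of_real_rotate:
  assumes "degree f = n"
  shows "(-\<i>) ^ n * poly (map_poly complex_of_real f) (\<i> * z) =
    (\<Sum>k\<in>{0..n}. complex_of_real (coeff f (n - k)) * z ^ (n - k) * (-\<i>) ^ k)"
proof -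
  have "(-\<i>) ^ n * poly (map_poly complex_of_real f) (\<i> * z) =
      (\<Sum>j\<in>{0..n}. (-\<i>) ^ n * (complex_of_real (coeff f j) * (\<i> * z) ^ j))"
    using assms unfolding poly_altdef sum_distrib_left atLeast0AtMost
    by (simp add: coeff_map_poly degree_map_poly)
  also have "\<dots> = (\<Sum>k\<in>{0..n}. (-\<i>) ^ n * (complex_of_real (coeff f (n - k)) * (\<i> * z) ^ (n - k)))"
    by (subst sum.atLeastAtMost_rev) simp
  also have "\<dots> = (\<Sum>k\<in>{0..n}. complex_of_real (coeff f (n - k)) * z ^ (n - k) * (-\<i>) ^ k)"
  proof (intro sum.cong refl)
    fix k assume "k \<in> {0..n}"
    then have "(-\<i>) ^ n = (-\<i>) ^ k * (-\<i>) ^ (n - k)"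
      by (simp flip: power_add)
    moreover have "(-\<i>) ^ (n - k) * \<i> ^ (n - k) = (1 :: complex)"
      by (simp flip: power_mult_distrib)
    ultimately show "(-\<i>) ^ n * (complex_of_real (coeff f (n - k)) * (\<i> * z) ^ (n - k)) =
        complex_of_real (coeff f (n - k)) * z ^ (n - k) * (-\<i>) ^ k"
      by (simp add: power_mult_distrib algebra_simps)
  qed
  finally show ?thesis .
qed

lemma re_im_poly_even_odd_part_linear_factors:
  assumes "degree f = n" "lead_coeff f = 1"
  defines "W \<equiv> proots (map_poly complex_of_real f)"
  shows "re_im_poly (even_part n f) (- odd_part n f) = (\<Prod>z\<in>#image_mset (\<lambda>w. -\<i> * w) W. [:-z, 1:])"
proof (rule poly_eq_poly_eq_iff[THEN iffD1], rule ext)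
  fix z
  have "lead_coeff (map_poly complex_of_real f) = 1" "degree (map_poly complex_of_real f) = n"
    using assms by (simp_all add: degree_map_poly coeff_map_poly)
  then have g: "map_poly complex_of_real f = (\<Prod>w\<in>#W. [:-w, 1:])" "size W = n"
    using monic_linear_factors_proots by (auto simp: W_def size_proots_complex)
  have "poly (re_im_poly (even_part n f) (- odd_part n f)) z =
      (-\<i>) ^ n * poly (map_poly complex_of_real f) (\<i> * z)"
    unfolding poly_re_im_poly_even_odd_part poly_map_poly_of_real_rotate[OF assms(1)] ..
  also have "\<dots> = (\<Prod>w\<in>#W. -\<i>) * (\<Prod>w\<in>#W. \<i> * z - w)"
    by (subst g(1)) (simp add: poly_prod_mset g(2))
  also have "\<dots> = (\<Prod>w\<in>#W. -\<i> * (\<i> * z - w))"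
    by (rule prod_mset.distrib[symmetric])
  also have "\<dots> = (\<Prod>w\<in>#W. z - -\<i> * w)"
    by (intro arg_cong[where f = prod_mset] image_mset_cong) (simp add: algebra_simps)
  finally show "poly (re_im_poly (even_part n f) (- odd_part n f)) z =
      poly (\<Prod>z\<in>#image_mset (\<lambda>w. -\<i> * w) W. [:-z, 1:]) z"
    by (simp add: poly_prod_mset multiset.map_comp comp_def add.commute)
qed

lemma interlace_concl_left_right_roots:
  assumes "degree f = n" "lead_coeff f = 1"
  defines "g \<equiv> map_poly complex_of_real f"
  shows "interlace_concl n (nroots_in g {z. Re z > 0}) (nroots_in g {z. Re z < 0}) (nroots_in g {z. Re z = 0})
    (even_part n f) (odd_part n f)"
proof -
  define W where "W = proots g"
  have "lead_coeff g = 1" "size W = n"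
    using assms by (simp_all add: W_def g_def degree_map_poly coeff_map_poly size_proots_complex)
  then have "g \<noteq> 0"
    by auto
  then have roots: "nroots_in g S = size {#w\<in>#W. w \<in> S#}" for S
    by (simp add: W_def nroots_in_eq_size_proots)
  have "interlace_concl (size (image_mset (\<lambda>w. -\<i> * w) W))
      (size {#z\<in>#image_mset (\<lambda>w. -\<i> * w) W. Im z > 0#}) (size {#z\<in>#image_mset (\<lambda>w. -\<i> * w) W. Im z < 0#})
      (size {#z\<in>#image_mset (\<lambda>w. -\<i> * w) W. Im z = 0#}) (even_part n f) (- odd_part n f)"
    using re_im_poly_even_odd_part_linear_factors[OF assms(1,2)]
    by (intro interlace_concl_of_linear_factors) (simp_all add: W_def g_def)
  then have "interlace_concl n (nroots_in g {z. Re z < 0}) (nroots_in g {z. Re z > 0}) (nroots_in g {z. Re z = 0})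
      (even_part n f) (- odd_part n f)"
    unfolding roots using \<open>size W = n\<close> by (simp add: filter_mset_image_mset)
  then show ?thesis
    unfolding interlace_concl_uminus .
qed

theorem mainTheorem3:
  shows
  "(\<forall>(n::nat) (P::real poly) (Q::real poly) np nm n0.
      let f = map_poly complex_of_real P + smult \<i> (map_poly complex_of_real Q) in
      n \<ge> 1 \<and> degree P = n \<and> lead_coeff P = 1 \<and> degree Q < n \<and>
      np = nroots_in f {z. Im z > 0} \<and> nm = nroots_in f {z. Im z < 0} \<and>
      n0 = nroots_in f {z. Im z = 0} \<and> n0 < n
      \<longrightarrow> interlace_concl n np nm n0 P Q)
   \<and>
   (\<forall>(n::nat) (f::real poly) np nm n0.
      let g = map_poly complex_of_real f in
      n \<ge> 1 \<and> degree f = n \<and> lead_coeff f = 1 \<and>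
      np = nroots_in g {z. Re z > 0} \<and> nm = nroots_in g {z. Re z < 0} \<and>
      n0 = nroots_in g {z. Re z = 0} \<and> n0 < n
      \<longrightarrow> interlace_concl n np nm n0 (even_part n f) (odd_part n f))"
  using interlace_concl_upper_lower_roots interlace_concl_left_right_roots
  unfolding re_im_poly_def Let_def by blast

end
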